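(* Let $m,n\ge 1$, $k=\min(m,n)$, and let $M^\star\in\mathbb{R}^{m\times n}$ have singular value decomposition $M^\star=P\Sigma Q^\top$ with $P\in\mathbb{R}^{m\times k}$, $Q\in\mathbb{R}^{n\times k}$ having orthonormal columns $p_i,q_i$ and $\Sigma=\mathrm{diag}(\sigma_1,\dots,\sigma_k)$ with $\sigma_1>\sigma_2>\cdots>\sigma_k>0$. For $r\in\{1,\dots,k\}$ let $A_r=\sum_{i=1}^r\sigma_i p_iq_i^\top$. For $U\in\mathbb{R}^{m\times k}$, $V\in\mathbb{R}^{n\times k}$ define $$\mathcal{E}(U,V,r)=\min_{S_r\subseteq\{1,\dots,k\},\,|S_r|=r}\bigl\|U\Pi_{S_r}V^\top-A_r\bigr\|_F^2,$$ where $\Pi_{S}$ is the $k\times k$ diagonal matrix with $(\Pi_S)_{ii}=1$ if $i\in S$ and $0$ otherwise. Let $\mathcal{M}=\{(U,V)\in\mathbb{R}^{m\times k}\times\mathbb{R}^{n\times k}: UV^\top=M^\star\}$ be the set of global minimizers of $\mathcal{L}_{PTS}(U,V)=\|UV^\top-M^\star\|_F^2$. Then for each $r<k$, the set $\mathcal{M}_r=\{(U,V)\in\mathcal{M}:\mathcal{E}(U,V,r)=0\}$ has Lebesgue measure zero relative to $\mathcal{M}$.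
   Context: $\|\cdot\|_F$ denotes the Frobenius norm. $A_r$ is the (unique) best rank-$r$ approximation of $M^\star$ (truncated SVD). *)

theory Defs
  imports "HOL-Analysis.Analysis"
begin

text \<open>Real matrices are rendered as real^'c^'r (rows indexed by 'r, columns by 'c).\<close>

definition frob_norm :: "real^'c^'r \<Rightarrow> real" where
  "frob_norm A = sqrt (\<Sum>i\<in>UNIV. \<Sum>j\<in>UNIV. (A $ i $ j)^2)"

definition diag_mat :: "('k \<Rightarrow> real) \<Rightarrow> real^'k^'k" where
  "diag_mat d = (\<chi> i j. if i = j then d i else 0)"

definition sel_mat :: "'k set \<Rightarrow> real^'k^'k" where
  "sel_mat S = diag_mat (\<lambda>i. if i \<in> S then 1 else 0)"

definition has_orthonormal_columns :: "real^'k^'m \<Rightarrow> bool" where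
  "has_orthonormal_columns P \<longleftrightarrow> transpose P ** P = mat 1"

definition col_outer :: "real^'k^'m \<Rightarrow> real^'k^'n \<Rightarrow> 'k \<Rightarrow> real^'n^'m" where
  "col_outer P Q i = (\<chi> a b. P $ a $ i * Q $ b $ i)"

text \<open>Indices of the r largest singular values (the singular values are pairwise
  distinct, so with sigma_1 > ... > sigma_k these are exactly the indices 1..r).\<close>
definition top_indices :: "('k::finite \<Rightarrow> real) \<Rightarrow> nat \<Rightarrow> 'k set" where
  "top_indices \<sigma> r = {i. card {j. \<sigma> i < \<sigma> j} < r}"

definition trunc_svd :: "real^'k^'m \<Rightarrow> ('k::finite \<Rightarrow> real) \<Rightarrow> real^'k^'n \<Rightarrow> nat \<Rightarrow> real^'n^'m" where
  "trunc_svd P \<sigma> Q r = (\<Sum>i\<in>top_indices \<sigma> r. \<sigma> i *\<^sub>R col_outer P Q i)"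

definition err_E :: "real^'k^'m \<Rightarrow> real^'k^'n \<Rightarrow> real^'n^'m \<Rightarrow> nat \<Rightarrow> real" where
  "err_E U V Ar r = Min {(frob_norm (U ** sel_mat S ** transpose V - Ar))^2 | S. card S = r}"

definition minimizers :: "real^'n^'m \<Rightarrow> ((real^'k^'m) \<times> (real^'k^'n)) set" where
  "minimizers Mstar = {(U,V). U ** transpose V = Mstar}"

text \<open>Measure relative to M: M is the smooth k^2-dimensional manifold parametrised
  (diffeomorphically) by GL_k via G |-> (P Sigma G, Q G^{-T}).\<close>
definition chart :: "real^'k^'m \<Rightarrow> ('k \<Rightarrow> real) \<Rightarrow> real^'k^'n \<Rightarrow> real^'k^'k
    \<Rightarrow> (real^'k^'m) \<times> (real^'k^'n)" where
  "chart P \<sigma> Q G = (P ** diag_mat \<sigma> ** G, Q ** transpose (matrix_inv G))"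

definition rel_null :: "real^'k^'m \<Rightarrow> ('k \<Rightarrow> real) \<Rightarrow> real^'k^'n
    \<Rightarrow> ((real^'k^'m) \<times> (real^'k^'n)) set \<Rightarrow> bool" where
  "rel_null P \<sigma> Q X \<longleftrightarrow> {G. invertible G \<and> chart P \<sigma> Q G \<in> X} \<in> null_sets lborel"

end

theory Submission
  imports Defs
begin

text \<open>Parametrise the exact factorisations of \<open>M\<^sup>\<star> = P \<Sigma> Q\<^sup>T\<close> by invertible \<open>G\<close> via
  \<open>(U, V) = (P \<Sigma> G, Q G\<^sup>-\<^sup>T)\<close>. Then \<open>U \<Pi>\<^sub>S V\<^sup>T = P \<Sigma> G \<Pi>\<^sub>S G\<^sup>-\<^sup>1 Q\<^sup>T\<close>, and since \<open>P\<close>, \<open>Q\<close>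
  have orthonormal columns and \<open>\<Sigma>\<close> is invertible, this equals \<open>A\<^sub>r = P \<Sigma> \<Pi>\<^sub>T Q\<^sup>T\<close> exactly
  when \<open>G \<Pi>\<^sub>S = \<Pi>\<^sub>T G\<close>. Comparing entries, the latter forces \<open>G\<^sub>a\<^sub>b = 0\<close> whenever exactly one
  of \<open>a \<in> T\<close>, \<open>b \<in> S\<close> holds, and such a pair \<open>(a, b)\<close> exists because \<open>0 < |S| < k\<close>.
  So the parameters in question lie in the Lebesgue-null set of matrices with a vanishing entry.\<close>

lemma diag_mat_mult_nth: "(diag_mat d ** (A::real^'n^'k)) $ i $ j = d i * A $ i $ j"
  unfolding matrix_matrix_mult_def diag_mat_def
  by (simp add: if_distrib[of "\<lambda>x. x * _"] sum.delta cong: if_cong)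

lemma mult_diag_mat_nth: "((A::real^'k^'n) ** diag_mat d) $ i $ j = A $ i $ j * d j"
  unfolding matrix_matrix_mult_def diag_mat_def
  by (simp add: if_distrib[of "\<lambda>x. _ * x"] sum.delta' cong: if_cong)

lemma diag_mat_mult_diag_mat: "diag_mat d ** diag_mat e = diag_mat (\<lambda>i. d i * e i)"
  by (simp add: vec_eq_iff diag_mat_mult_nth) (simp add: diag_mat_def)

lemma invertible_diag_mat:
  assumes "\<And>i. d i \<noteq> 0"
  shows "invertible (diag_mat d)"
proof -
  have "diag_mat (\<lambda>i. inverse (d i)) ** diag_mat d = mat 1"
    using assms by (simp add: diag_mat_mult_diag_mat) (simp add: diag_mat_def mat_def)
  then show ?thesis
    using invertible_left_inverse by blast
qed

lemma matrix_inv_right: "invertible A \<Longrightarrow> A ** matrix_inv A = mat 1"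
  and matrix_inv_left: "invertible A \<Longrightarrow> matrix_inv A ** A = mat 1"
  unfolding invertible_def matrix_inv_def by (metis (mono_tags, lifting) someI_ex)+

lemma invertible_mult_left_cancel:
  fixes A :: "'a::semiring_1^'k^'k"
  assumes "invertible A"
  shows "A ** X = A ** Y \<longleftrightarrow> X = Y"
  by (metis assms matrix_inv_left matrix_mul_assoc matrix_mul_lid)

lemma invertible_mult_right_cancel:
  fixes A :: "'a::semiring_1^'k^'k"
  assumes "invertible A"
  shows "X ** A = Y ** A \<longleftrightarrow> X = Y"
  by (metis assms matrix_inv_right matrix_mul_assoc matrix_mul_rid)

lemma orthonormal_columns_cancel:
  assumes "has_orthonormal_columns (P::real^'k^'m)" "has_orthonormal_columns (Q::real^'k^'n)"
  shows "P ** X ** transpose Q = P ** Y ** transpose Q \<longleftrightarrow> X = Y"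
proof
  have "transpose P ** (P ** Z ** transpose Q) ** Q = Z" for Z :: "real^'k^'k"
  proof -
    have "transpose P ** (P ** Z ** transpose Q) ** Q = (transpose P ** P) ** Z ** (transpose Q ** Q)"
      by (simp add: matrix_mul_assoc)
    then show ?thesis
      using assms by (simp add: has_orthonormal_columns_def matrix_mul_lid matrix_mul_rid)
  qed
  then show "P ** X ** transpose Q = P ** Y ** transpose Q \<Longrightarrow> X = Y"
    by metis
qed simp

lemma mult_transpose_nth:
  "((X::real^'k^'m) ** transpose (Q::real^'k^'n)) $ a $ b = (\<Sum>c\<in>UNIV. X $ a $ c * Q $ b $ c)"
  by (simp add: matrix_matrix_mult_def transpose_def)

lemma sum_col_outer:
  "(\<Sum>i\<in>T. d i *\<^sub>R col_outer P Q i) = P ** diag_mat (\<lambda>i. if i \<in> T then d i else 0) ** transpose Q"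
proof -
  have "(\<Sum>i\<in>T. d i *\<^sub>R col_outer P Q i) $ a $ b
      = (P ** diag_mat (\<lambda>i. if i \<in> T then d i else 0) ** transpose Q) $ a $ b" for a b
  proof -
    have "(\<Sum>i\<in>T. d i *\<^sub>R col_outer P Q i) $ a $ b = (\<Sum>i\<in>T. d i * (P $ a $ i * Q $ b $ i))"
      unfolding col_outer_def by simp
    also have "\<dots> = (\<Sum>i\<in>UNIV. P $ a $ i * (if i \<in> T then d i else 0) * Q $ b $ i)"
      by (simp add: if_distrib[of "\<lambda>x. _ * x"] if_distrib[of "\<lambda>x. x * _"] sum.If_cases algebra_simps)
    also have "\<dots> = (P ** diag_mat (\<lambda>i. if i \<in> T then d i else 0) ** transpose Q) $ a $ b"
      by (simp only: mult_transpose_nth mult_diag_mat_nth)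
    finally show ?thesis .
  qed
  then show ?thesis by (simp add: vec_eq_iff)
qed

lemma trunc_svd_eq: "trunc_svd P \<sigma> Q r = P ** diag_mat \<sigma> ** sel_mat (top_indices \<sigma> r) ** transpose Q"
proof -
  let ?T = "top_indices \<sigma> r"
  have "diag_mat \<sigma> ** sel_mat ?T = diag_mat (\<lambda>i. if i \<in> ?T then \<sigma> i else 0)"
    unfolding sel_mat_def diag_mat_mult_diag_mat by (simp add: if_distrib[of "\<lambda>x. _ * x"] cong: if_cong)
  then show ?thesis
    unfolding trunc_svd_def sum_col_outer by (metis matrix_mul_assoc)
qed

lemma frob_norm_eq_0_iff: "frob_norm X = 0 \<longleftrightarrow> X = 0"
  unfolding frob_norm_def
  by (simp add: sum_nonneg_eq_0_iff sum_nonneg vec_eq_iff)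

lemma err_E_eq_0_iff:
  fixes U :: "real^'k^'m" and V :: "real^'k^'n"
  assumes "r \<le> CARD('k)"
  shows "err_E U V A r = 0 \<longleftrightarrow> (\<exists>S. card S = r \<and> U ** sel_mat S ** transpose V = A)"
proof -
  define F where "F S = (frob_norm (U ** sel_mat S ** transpose V - A))^2" for S :: "'k set"
  have E: "err_E U V A r = Min (F ` {S. card S = r})"
    unfolding err_E_def F_def by (simp add: setcompr_eq_image)
  obtain S0 :: "'k set" where "card S0 = r"
    using obtain_subset_with_card_n[of r "UNIV :: 'k set"] assms by auto
  then have ne: "F ` {S. card S = r} \<noteq> {}" by auto
  have fin: "finite (F ` {S. card S = r})" by simp
  have "Min (F ` {S. card S = r}) = 0 \<longleftrightarrow> 0 \<in> F ` {S. card S = r}"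
  proof
    assume "Min (F ` {S. card S = r}) = 0"
    then show "0 \<in> F ` {S. card S = r}" using Min_in[OF fin ne] by simp
  next
    assume "0 \<in> F ` {S. card S = r}"
    moreover have "0 \<le> Min (F ` {S. card S = r})"
      using fin ne by (simp add: F_def)
    ultimately show "Min (F ` {S. card S = r}) = 0"
      using Min_le[OF fin] by (meson antisym)
  qed
  also have "\<dots> \<longleftrightarrow> (\<exists>S. card S = r \<and> U ** sel_mat S ** transpose V = A)"
    by (auto simp: F_def frob_norm_eq_0_iff)
  finally show ?thesis using E by simp
qed

lemma chart_in_minimizers:
  assumes "invertible G"
  shows "chart P \<sigma> Q G \<in> minimizers (P ** diag_mat \<sigma> ** transpose Q)"
proof -
  have "(P ** diag_mat \<sigma> ** G) ** transpose (Q ** transpose (matrix_inv G))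
      = P ** diag_mat \<sigma> ** (G ** matrix_inv G) ** transpose Q"
    by (simp add: matrix_transpose_mul matrix_mul_assoc)
  then show ?thesis
    using matrix_inv_right[OF assms] by (simp add: chart_def minimizers_def matrix_mul_rid)
qed

lemma orthonormal_conj_eq_iff:
  fixes P :: "real^'k^'m" and Q :: "real^'k^'n" and D G W W' :: "real^'k^'k"
  assumes "has_orthonormal_columns P" "has_orthonormal_columns Q"
    and D: "invertible D" and G: "invertible G"
  shows "(P ** D ** G) ** W ** transpose (Q ** transpose (matrix_inv G)) = P ** D ** W' ** transpose Q
    \<longleftrightarrow> G ** W = W' ** G"
proof -
  have "(P ** D ** G) ** W ** transpose (Q ** transpose (matrix_inv G))
      = P ** (D ** (G ** W ** matrix_inv G)) ** transpose Q"
    by (simp add: matrix_transpose_mul matrix_mul_assoc)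
  moreover have "P ** D ** W' ** transpose Q = P ** (D ** W') ** transpose Q"
    by (simp add: matrix_mul_assoc)
  moreover have "G ** W ** matrix_inv G ** G = G ** W"
    using matrix_inv_left[OF G] by (simp add: matrix_mul_assoc[symmetric] matrix_mul_rid)
  ultimately show ?thesis
    using orthonormal_columns_cancel[OF assms(1,2)] invertible_mult_left_cancel[OF D]
      invertible_mult_right_cancel[OF G, of "G ** W ** matrix_inv G" W'] by simp
qed

lemma chart_preimage_eq:
  fixes P :: "real^'k^'m" and Q :: "real^'k^'n"
  assumes "has_orthonormal_columns P" "has_orthonormal_columns Q"
    and "\<forall>i. \<sigma> i \<noteq> 0" and "r \<le> CARD('k)"
  shows "{G. invertible G \<and> chart P \<sigma> Q G \<in>
            {(U, V) \<in> minimizers (P ** diag_mat \<sigma> ** transpose Q). err_E U V (trunc_svd P \<sigma> Q r) r = 0}}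
    = {G. invertible G} \<inter> (\<Union>S\<in>{S. card S = r}. {G. G ** sel_mat S = sel_mat (top_indices \<sigma> r) ** G})"
proof -
  have \<Sigma>: "invertible (diag_mat \<sigma>)"
    using assms(3) by (intro invertible_diag_mat) simp
  have "err_E (P ** diag_mat \<sigma> ** G) (Q ** transpose (matrix_inv G)) (trunc_svd P \<sigma> Q r) r = 0
      \<longleftrightarrow> (\<exists>S. card S = r \<and> G ** sel_mat S = sel_mat (top_indices \<sigma> r) ** G)"
    if "invertible G" for G :: "real^'k^'k"
    unfolding err_E_eq_0_iff[OF assms(4)] trunc_svd_eq
    using orthonormal_conj_eq_iff[OF assms(1,2) \<Sigma> that] by simp
  then show ?thesis
    using chart_in_minimizers by (auto simp: chart_def)
qed

lemma sets_borel_invertible: "{G::real^'k^'k. invertible G} \<in> sets borel"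
proof -
  have "open {G::real^'k^'k. det G \<noteq> 0}"
    unfolding det_def by (intro open_Collect_neq continuous_intros)
  then show ?thesis
    by (simp add: invertible_det_nz)
qed

lemma closed_intertwiners: "closed {G::real^'n^'m. G ** X = Y ** G}"
  unfolding matrix_matrix_mult_def by (intro closed_Collect_eq continuous_intros)

lemma null_sets_entry_eq_0: "{G::real^'c^'r. G $ i $ j = 0} \<in> null_sets lborel"
proof -
  have "{G::real^'c^'r. G $ i $ j = 0} = {G. axis i (axis j 1) \<bullet> G = 0}"
    by (simp add: inner_axis')
  moreover have "negligible {G::real^'c^'r. axis i (axis j 1) \<bullet> G = 0}"
    by (rule negligible_hyperplane) (simp add: axis_eq_0_iff)
  moreover have "closed {G::real^'c^'r. G $ i $ j = 0}"
    by (intro closed_Collect_eq continuous_intros)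
  ultimately show ?thesis
    by (metis negligible_iff_null_sets null_sets_completion_iff sets_lborel borel_closed)
qed

lemma null_sets_some_entry_eq_0: "{G::real^'c^'r. \<exists>i j. G $ i $ j = 0} \<in> null_sets lborel"
proof -
  have "{G::real^'c^'r. \<exists>i j. G $ i $ j = 0} = (\<Union>i. \<Union>j. {G. G $ i $ j = 0})"
    by auto
  then show ?thesis
    by (simp add: null_sets_UN' null_sets_entry_eq_0)
qed

lemma intertwiner_sel_mat_has_zero_entry:
  fixes G :: "real^'k^'k"
  assumes "G ** sel_mat S = sel_mat T ** G" and "S \<noteq> {}" and "S \<noteq> UNIV"
  shows "\<exists>i j. G $ i $ j = 0"
proof -
  have entry: "G $ a $ b * (if b \<in> S then 1 else 0) = (if a \<in> T then 1 else 0) * G $ a $ b" for a b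
    using assms(1) unfolding vec_eq_iff sel_mat_def diag_mat_mult_nth mult_diag_mat_nth by simp
  obtain b where "b \<in> S" using assms(2) by auto
  obtain b' where "b' \<notin> S" using assms(3) by auto
  show ?thesis
  proof (cases "T = UNIV")
    case True
    then show ?thesis using entry[of b b'] \<open>b' \<notin> S\<close> by auto
  next
    case False
    then obtain a where "a \<notin> T" by auto
    then show ?thesis using entry[of a b] \<open>b \<in> S\<close> by auto
  qed
qed

theorem theorem4p1:
  fixes Mstar :: "real^'n^'m"
    and P :: "real^'k^'m" and Q :: "real^'k^'n"
    and \<sigma> :: "'k \<Rightarrow> real" and r :: nat
  assumes "CARD('k) = min CARD('m) CARD('n)"
    and "has_orthonormal_columns P" and "has_orthonormal_columns Q"
    and "\<forall>i. \<sigma> i > 0" and "inj \<sigma>"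
    and "Mstar = P ** diag_mat \<sigma> ** transpose Q"
    and "1 \<le> r" and "r < CARD('k)"
  shows "rel_null P \<sigma> Q
           {(U, V) \<in> minimizers Mstar. err_E U V (trunc_svd P \<sigma> Q r) r = 0}"
proof -
  let ?B = "{G::real^'k^'k. invertible G}
    \<inter> (\<Union>S\<in>{S. card S = r}. {G. G ** sel_mat S = sel_mat (top_indices \<sigma> r) ** G})"
  have "?B \<in> sets lborel"
    by (intro sets.Int sets.finite_UN ballI) (simp_all add: sets_borel_invertible borel_closed closed_intertwiners)
  moreover have "?B \<subseteq> {G. \<exists>i j. G $ i $ j = 0}"
  proof
    fix G assume "G \<in> ?B"
    then obtain S where "card S = r" "G ** sel_mat S = sel_mat (top_indices \<sigma> r) ** G"
      by auto
    moreover from \<open>card S = r\<close> have "S \<noteq> {}" "S \<noteq> UNIV"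
      using assms(7,8) by auto
    ultimately show "G \<in> {G. \<exists>i j. G $ i $ j = 0}"
      using intertwiner_sel_mat_has_zero_entry by blast
  qed
  ultimately have "?B \<in> null_sets lborel"
    using null_sets_subset null_sets_some_entry_eq_0 by blast
  moreover have "\<forall>i. \<sigma> i \<noteq> 0"
    using assms(4) by (simp add: less_imp_neq[symmetric])
  ultimately show ?thesis
    unfolding rel_null_def assms(6) using chart_preimage_eq[OF assms(2,3)] assms(8) by simp
qed

end
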